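(* Consider the 1D radiative transfer setting with $x\in(0,1)$, $v\in[-1,1]$, $\langle f\rangle=\frac12\int_{-1}^1f(x,v)\,\mathrm{d}v$, $\mathcal{L}f=\langle f\rangle-f$, Knudsen number $\mathsf{Kn}>0$, a background scattering coefficient $\sigma_{s0}(x)>0$ and absorption coefficient $\sigma_a\equiv0$. Given arbitrary inflow data $\phi_d$ and a boundary point $y\in\{0,1\}$, let $f_0$ solve $$v\,\partial_xf_0=\tfrac1{\mathsf{Kn}}\sigma_{s0}\mathcal{L}f_0-\mathsf{Kn}\,\sigma_af_0,\qquad f_0|_{\Gamma_-}=\phi_d,$$ and let $g$ solve $$-v\,\partial_xg=\tfrac1{\mathsf{Kn}}\sigma_{s0}\mathcal{L}g-\mathsf{Kn}\,\sigma_ag,\qquad g|_{\Gamma_+}=\delta_y(x),$$ and define $\gamma_{\mathsf{Kn}}(x;\delta_y,\phi_d)=\frac1{\mathsf{Kn}}\int g(x,v;\delta_y)\,\mathcal{L}f_0(x,v;\phi_d)\,\mathrm{d}v$. Then $\gamma_{\mathsf{Kn}}$ is a constant independent of $x$.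
   Context: $\Gamma_-=\{(0,v):v>0\}\cup\{(1,v):v<0\}$ and $\Gamma_+=\{(0,v):v<0\}\cup\{(1,v):v>0\}$ are the incoming and outgoing boundary sets. *)

theory Defs
  imports "HOL-Analysis.Analysis"
begin

definition Gamma_minus :: "(real \<times> real) set" where
  "Gamma_minus = {(0, v) | v. 0 < v \<and> v \<le> 1} \<union> {(1, v) | v. -1 \<le> v \<and> v < 0}"

definition Gamma_plus :: "(real \<times> real) set" where
  "Gamma_plus = {(0, v) | v. -1 \<le> v \<and> v < 0} \<union> {(1, v) | v. 0 < v \<and> v \<le> 1}"

definition vavg :: "(real \<Rightarrow> real \<Rightarrow> real) \<Rightarrow> real \<Rightarrow> real" where
  "vavg f x = (1/2) * integral {-1..1} (\<lambda>v. f x v)"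

definition Lop :: "(real \<Rightarrow> real \<Rightarrow> real) \<Rightarrow> real \<Rightarrow> real \<Rightarrow> real" where
  "Lop f x v = vavg f x - f x v"

text \<open>Classical (bounded) solution of
   s * v * d_x f = (1/Kn) sigma_s L f - Kn sigma_a f   on (0,1) x [-1,1],
  with s = 1 (forward equation) or s = -1 (adjoint equation).\<close>
definition rte_solution ::
  "real \<Rightarrow> real \<Rightarrow> (real \<Rightarrow> real) \<Rightarrow> (real \<Rightarrow> real) \<Rightarrow> (real \<Rightarrow> real \<Rightarrow> real) \<Rightarrow> bool" where
  "rte_solution s Kn sigs siga f \<longleftrightarrow>
     bounded ((\<lambda>(x, v). f x v) ` ({0..1} \<times> {-1..1})) \<and>
     (\<forall>x\<in>{0..1}. (\<lambda>v. f x v) integrable_on {-1..1}) \<and>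
     (\<forall>v\<in>{-1..1}. continuous_on {0..1} (\<lambda>x. f x v)) \<and>
     (\<forall>v\<in>{-1..1}. \<forall>x\<in>{0<..<1}.
        (\<lambda>x. f x v) differentiable (at x) \<and>
        s * v * deriv (\<lambda>x. f x v) x = (1 / Kn) * sigs x * Lop f x v - Kn * siga x * f x v)"

definition gammaKn :: "real \<Rightarrow> (real \<Rightarrow> real \<Rightarrow> real) \<Rightarrow> (real \<Rightarrow> real \<Rightarrow> real) \<Rightarrow> real \<Rightarrow> real" where
  "gammaKn Kn g f0 x = (1 / Kn) * integral {-1..1} (\<lambda>v. g x v * Lop f0 x v)"

end

theory Submission
  imports Defs
begin

text \<open>In the optical depth \<open>t = (1/Kn) \<integral>\<^sub>0\<^sup>x \<sigma>\<^sub>s\<close> both transport equations become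
  \<open>v \<partial>\<^sub>t F = L F\<close> and \<open>v \<partial>\<^sub>t G = - L G\<close>, with constant coefficients. Since \<open>L\<close> is
  self-adjoint, the flux \<open>\<integral> v G F dv\<close> of a forward and an adjoint solution has zero derivative.
  Every translate \<open>F(\<cdot> + u)\<close> is again a forward solution, so \<open>\<integral> v G(s) F(s + u) dv\<close> is
  independent of \<open>s\<close> for each small \<open>u\<close>; differentiating in \<open>u\<close> at \<open>u = 0\<close> shows that
  \<open>\<integral> G(s) L F(s) dv = Kn \<gamma>\<^sub>K\<^sub>n\<close> is independent of \<open>s\<close>.\<close>

lemma leibniz_rule_bounded_real_derivative:
  fixes phi psi :: "real \<Rightarrow> real \<Rightarrow> real"
  assumes u: "u \<in> {a<..<b}"
    and der: "\<And>w v. w \<in> {a<..<b} \<Longrightarrow> v \<in> {c..d} \<Longrightarrow>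
      ((\<lambda>w. phi w v) has_real_derivative psi w v) (at w)"
    and bnd: "\<And>w v. w \<in> {a<..<b} \<Longrightarrow> v \<in> {c..d} \<Longrightarrow> \<bar>psi w v\<bar> \<le> M"
    and int: "\<And>w. w \<in> {a<..<b} \<Longrightarrow> phi w integrable_on {c..d}"
  shows "((\<lambda>w. integral {c..d} (phi w)) has_real_derivative integral {c..d} (psi u)) (at u)"
proof -
  define e where "e = min (u - a) (b - u)"
  have e: "e > 0" using u by (simp add: e_def)
  let ?Q = "\<lambda>h. (integral {c..d} (phi (u + h)) - integral {c..d} (phi u)) / h"
  have "(?Q \<longlongrightarrow> integral {c..d} (psi u)) (at 0 within ball 0 e)"
    unfolding tendsto_at_iff_sequentially
  proof (intro allI impI)
    fix X :: "nat \<Rightarrow> real"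
    assume X: "\<forall>i. X i \<in> ball 0 e - {0}" and X_lim: "X \<longlonglongrightarrow> 0"
    have X_in: "u + X k \<in> {a<..<b}" for k using X[rule_format, of k] by (auto simp: e_def dist_norm)
    have X_nz: "X k \<noteq> 0" for k using X by auto
    define q where "q k v = (phi (u + X k) v - phi u v) / X k" for k v
    have q_int: "q k integrable_on {c..d}" for k
      unfolding q_def using int X_in u by (intro integrable_on_divide integrable_diff) auto
    have q_bnd: "norm (q k v) \<le> M" if "v \<in> {c..d}" for k v
    proof -
      have "norm (phi (u + X k) v - phi u v) \<le> M * norm ((u + X k) - u)"
        by (rule field_differentiable_bound[where S="{a<..<b}" and f'="\<lambda>w. psi w v"])
          (use der bnd that X_in u in \<open>auto intro: has_field_derivative_at_within\<close>)
      then show ?thesis unfolding q_def using X_nz[of k] by (simp add: divide_le_eq abs_divide)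
    qed
    have q_lim: "(\<lambda>k. q k v) \<longlonglongrightarrow> psi u v" if "v \<in> {c..d}" for v
    proof -
      have "((\<lambda>h. (phi (u + h) v - phi u v) / h) \<longlongrightarrow> psi u v) (at 0)"
        using der u that by (simp add: DERIV_def)
      then show ?thesis unfolding q_def using X_nz X_lim
        unfolding tendsto_at_iff_sequentially by (auto simp: comp_def)
    qed
    have "(\<lambda>k. integral {c..d} (q k)) \<longlonglongrightarrow> integral {c..d} (psi u)"
      using dominated_convergence(2)[OF q_int integrable_const_ivl q_bnd q_lim] by blast
    moreover have "integral {c..d} (q k) = ?Q (X k)" for k
      unfolding q_def using int X_in u by (subst integral_divide) (auto simp: integral_diff)
    ultimately show "(?Q \<circ> X) \<longlonglongrightarrow> integral {c..d} (psi u)" by (simp add: comp_def)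
  qed
  moreover have "at (0::real) within ball 0 e = at 0" by (rule at_within_open) (use e in auto)
  ultimately show ?thesis by (simp add: DERIV_def)
qed

lemma integrable_on_mult_bounded:
  fixes f g :: "real \<Rightarrow> real"
  assumes f: "f integrable_on {c..d}" and g: "g integrable_on {c..d}"
    and f_bnd: "\<And>v. v \<in> {c..d} \<Longrightarrow> \<bar>f v\<bar> \<le> B"
    and g_bnd: "\<And>v. v \<in> {c..d} \<Longrightarrow> \<bar>g v\<bar> \<le> C"
  shows "(\<lambda>v. f v * g v) integrable_on {c..d}"
proof -
  have f_meas: "f \<in> borel_measurable (lebesgue_on {c..d})"
    and g_meas: "g \<in> borel_measurable (lebesgue_on {c..d})"
    using f g integrable_imp_measurable by blast+
  have "bounded (f ` {c..d})" using f_bnd unfolding bounded_iff by (metis image_iff real_norm_def)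
  moreover have "g absolutely_integrable_on {c..d}"
    by (rule measurable_bounded_by_integrable_imp_absolutely_integrable[where g="\<lambda>_. C"])
      (use g_meas g_bnd in auto)
  ultimately have "(\<lambda>v. f v * g v) absolutely_integrable_on {c..d}"
    by (intro absolutely_integrable_bounded_measurable_product_real f_meas) auto
  then show ?thesis using set_lebesgue_integral_eq_integral(1) by blast
qed

lemma abs_Lop_le:
  assumes "F t integrable_on {-1..1}" and "\<And>v. v \<in> {-1..1} \<Longrightarrow> \<bar>F t v\<bar> \<le> M"
    and "v \<in> {-1..1}"
  shows "\<bar>Lop F t v\<bar> \<le> 2 * M"
proof -
  have "norm (integral {-1..1} (F t)) \<le> integral {-1..1} (\<lambda>_::real. M)"
    by (rule integral_norm_bound_integral) (use assms in auto)
  then have "\<bar>vavg F t\<bar> \<le> M" by (simp add: vavg_def)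
  moreover have "\<bar>F t v\<bar> \<le> M" using assms by auto
  ultimately show ?thesis unfolding Lop_def by linarith
qed

lemma integral_mult_Lop_antisym:
  assumes "F t integrable_on {-1..1}" and "G t integrable_on {-1..1}"
  shows "integral {-1..1} (\<lambda>v. G t v * Lop F t v - Lop G t v * F t v) = 0"
proof -
  have "integral {-1..1} (\<lambda>v. G t v * Lop F t v - Lop G t v * F t v)
      = integral {-1..1} (\<lambda>v. vavg F t * G t v - vavg G t * F t v)"
    by (rule integral_cong) (simp add: Lop_def algebra_simps)
  also have "\<dots> = vavg F t * integral {-1..1} (G t) - vavg G t * integral {-1..1} (F t)"
    using assms by (simp add: integral_diff integrable_on_mult_right)
  also have "\<dots> = 0" by (simp add: vavg_def)
  finally show ?thesis .
qed

text \<open>Differentiability is required of \<open>v F\<close> only,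
  so nothing is demanded of \<open>F\<close> at \<open>v = 0\<close>.\<close>

definition optical_solution ::
  "real \<Rightarrow> (real \<Rightarrow> real \<Rightarrow> real) \<Rightarrow> real \<Rightarrow> real \<Rightarrow> real \<Rightarrow> bool" where
  "optical_solution s F a b M \<longleftrightarrow>
     (\<forall>t\<in>{a<..<b}. F t integrable_on {-1..1} \<and>
        (\<forall>v\<in>{-1..1}. \<bar>F t v\<bar> \<le> M \<and>
           ((\<lambda>t. v * F t v) has_real_derivative s * Lop F t v) (at t)))"

lemma optical_solutionD:
  assumes "optical_solution s F a b M" and "t \<in> {a<..<b}"
  shows optical_solution_integrable: "F t integrable_on {-1..1}"
    and optical_solution_bound: "v \<in> {-1..1} \<Longrightarrow> \<bar>F t v\<bar> \<le> M"
    and optical_solution_deriv: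
      "v \<in> {-1..1} \<Longrightarrow> ((\<lambda>t. v * F t v) has_real_derivative s * Lop F t v) (at t)"
  using assms unfolding optical_solution_def by auto

lemma optical_solution_bound_nonneg:
  assumes "optical_solution s F a b M" and "t \<in> {a<..<b}"
  shows "M \<ge> 0"
proof -
  have "\<bar>F t 0\<bar> \<le> M" by (rule optical_solution_bound[OF assms]) simp
  then show ?thesis by linarith
qed

lemma optical_solution_Lop_zero_velocity:
  assumes "optical_solution s F a b M" and "t \<in> {a<..<b}" and "s \<noteq> 0"
  shows "Lop F t 0 = 0"
proof -
  have "((\<lambda>t. 0 * F t 0) has_real_derivative s * Lop F t 0) (at t)"
    by (rule optical_solution_deriv[OF assms(1,2)]) simp
  moreover have "((\<lambda>t. 0 * F t 0) has_real_derivative 0) (at t)" by simp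
  ultimately have "s * Lop F t 0 = 0" using DERIV_unique by blast
  then show ?thesis using assms(3) by simp
qed

lemma optical_solution_subinterval:
  "optical_solution s F a b M \<Longrightarrow> a \<le> a' \<Longrightarrow> b' \<le> b \<Longrightarrow> optical_solution s F a' b' M"
  unfolding optical_solution_def by auto

lemma optical_solution_shift:
  assumes "optical_solution s F a b M"
  shows "optical_solution s (\<lambda>t. F (t + u)) (a - u) (b - u) M"
proof -
  have L: "Lop (\<lambda>t. F (t + u)) t v = Lop F (t + u) v" for t v by (simp add: Lop_def vavg_def)
  have "((\<lambda>t. v * F (t + u) v) has_real_derivative s * Lop F (t + u) v) (at t)"
    if "t \<in> {a - u<..<b - u}" "v \<in> {-1..1}" for t v
    using optical_solution_deriv[OF assms, of "t + u" v] that DERIV_shift[of "\<lambda>t. v * F t v"]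
    by simp
  then show ?thesis using assms unfolding optical_solution_def L by auto
qed

lemma optical_solution_mult_Lop_bound:
  assumes F: "optical_solution s F a b M" and G: "optical_solution s' G a b M"
    and t: "t \<in> {a<..<b}" and w: "w \<in> {a<..<b}" and v: "v \<in> {-1..1}"
  shows "\<bar>G t v * Lop F w v\<bar> \<le> M * (2 * M)"
proof -
  have "\<bar>G t v\<bar> \<le> M" by (rule optical_solution_bound[OF G t v])
  moreover have "\<bar>Lop F w v\<bar> \<le> 2 * M"
    by (rule abs_Lop_le[where F=F and t=w, OF optical_solution_integrable[OF F w] optical_solution_bound[OF F w] v])
  ultimately show ?thesis
    unfolding abs_mult by (rule mult_mono) (use optical_solution_bound_nonneg[OF G t] in auto)
qed

lemma optical_solution_flux_integrable:
  assumes F: "optical_solution s F a b M" and G: "optical_solution s' G a b M"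
    and t: "t \<in> {a<..<b}" and w: "w \<in> {a<..<b}"
  shows "(\<lambda>v. v * G t v * F w v) integrable_on {-1..1}"
proof -
  have M: "M \<ge> 0" using optical_solution_bound_nonneg[OF F w] .
  have vG_int: "(\<lambda>v. v * G t v) integrable_on {-1..1}"
    by (rule integrable_on_mult_bounded[where B=1 and C=M,
          OF integrable_continuous_interval[OF continuous_on_id] optical_solution_integrable[OF G t]])
      (auto intro: optical_solution_bound[OF G t])
  have vG_bnd: "\<bar>v * G t v\<bar> \<le> M" if "v \<in> {-1..1}" for v
  proof -
    have "\<bar>v\<bar> * \<bar>G t v\<bar> \<le> 1 * M"
      by (rule mult_mono) (use that optical_solution_bound[OF G t that] M in auto)
    then show ?thesis by (simp add: abs_mult)
  qed
  show ?thesis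
    by (rule integrable_on_mult_bounded[OF vG_int optical_solution_integrable[OF F w] vG_bnd
          optical_solution_bound[OF F w]])
qed

lemma optical_solution_flux_density_deriv:
  assumes F: "optical_solution 1 F a b M" and G: "optical_solution (-1) G a b M"
    and w: "w \<in> {a<..<b}" and v: "v \<in> {-1..1}"
  shows "((\<lambda>w. v * G w v * F w v) has_real_derivative
      G w v * Lop F w v - Lop G w v * F w v) (at w)"
proof (cases "v = 0")
  case True
  then show ?thesis
    using optical_solution_Lop_zero_velocity[OF F w] optical_solution_Lop_zero_velocity[OF G w]
    by simp
next
  case False
  have dG: "((\<lambda>w. v * G w v) has_real_derivative - Lop G w v) (at w)"
    using optical_solution_deriv[OF G w v] by simp
  have "((\<lambda>w. (1 / v) * (v * F w v)) has_real_derivative (1 / v) * Lop F w v) (at w)"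
    by (rule DERIV_cmult[OF optical_solution_deriv[OF F w v, simplified]])
  then have dF: "((\<lambda>w. F w v) has_real_derivative Lop F w v / v) (at w)"
    using False by simp
  have "(- Lop G w v) * F w v + (Lop F w v / v) * (v * G w v)
      = G w v * Lop F w v - Lop G w v * F w v"
    using False by (simp add: field_simps)
  with DERIV_mult[OF dG dF] show ?thesis by (simp add: mult.assoc)
qed

lemma optical_solution_flux_const:
  assumes F: "optical_solution 1 F a b M" and G: "optical_solution (-1) G a b M"
    and t1: "t1 \<in> {a<..<b}" and t2: "t2 \<in> {a<..<b}"
  shows "integral {-1..1} (\<lambda>v. v * G t1 v * F t1 v) = integral {-1..1} (\<lambda>v. v * G t2 v * F t2 v)"
proof -
  have deriv: "((\<lambda>t. integral {-1..1} (\<lambda>v. v * G t v * F t v)) has_real_derivative 0) (at t)"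
    if t: "t \<in> {a<..<b}" for t
  proof -
    have "((\<lambda>t. integral {-1..1} (\<lambda>v. v * G t v * F t v)) has_real_derivative
        integral {-1..1} (\<lambda>v. G t v * Lop F t v - Lop G t v * F t v)) (at t)"
    proof (rule leibniz_rule_bounded_real_derivative[OF t])
      fix w v :: real assume w: "w \<in> {a<..<b}" and v: "v \<in> {-1..1}"
      show "((\<lambda>w. v * G w v * F w v) has_real_derivative
          G w v * Lop F w v - Lop G w v * F w v) (at w)"
        by (rule optical_solution_flux_density_deriv[OF F G w v])
      have "\<bar>G w v * Lop F w v\<bar> \<le> M * (2 * M)"
        by (rule optical_solution_mult_Lop_bound[OF F G w w v])
      moreover have "\<bar>Lop G w v * F w v\<bar> \<le> M * (2 * M)"
        by (subst mult.commute[of "Lop G w v"]) (rule optical_solution_mult_Lop_bound[OF G F w w v])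
      ultimately show "\<bar>G w v * Lop F w v - Lop G w v * F w v\<bar> \<le> 2 * (M * (2 * M))"
        by linarith
    next
      fix w assume w: "w \<in> {a<..<b}"
      show "(\<lambda>v. v * G w v * F w v) integrable_on {-1..1}"
        by (rule optical_solution_flux_integrable[OF F G w w])
    qed
    moreover have "integral {-1..1} (\<lambda>v. G t v * Lop F t v - Lop G t v * F t v) = 0"
      by (rule integral_mult_Lop_antisym[where F=F and G=G and t=t,
            OF optical_solution_integrable[OF F t] optical_solution_integrable[OF G t]])
    ultimately show ?thesis by simp
  qed
  have "\<exists>c. \<forall>t\<in>{a<..<b}. integral {-1..1} (\<lambda>v. v * G t v * F t v) = c"
  proof (rule has_field_derivative_zero_constant)
    fix t assume "t \<in> {a<..<b}"
    from deriv[OF this]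
    show "((\<lambda>t. integral {-1..1} (\<lambda>v. v * G t v * F t v)) has_real_derivative 0) (at t within {a<..<b})"
      by (rule has_field_derivative_at_within)
  qed simp
  then show ?thesis using t1 t2 by metis
qed

lemma optical_solution_shifted_pairing_deriv:
  assumes F: "optical_solution 1 F a b M" and G: "optical_solution s' G a b M"
    and t: "t \<in> {a<..<b}"
  shows "((\<lambda>u. integral {-1..1} (\<lambda>v. v * G t v * F (t + u) v)) has_real_derivative
      integral {-1..1} (\<lambda>v. G t v * Lop F t v)) (at 0)"
proof -
  have "((\<lambda>u. integral {-1..1} (\<lambda>v. v * G t v * F (t + u) v)) has_real_derivative
      integral {-1..1} (\<lambda>v. G t v * Lop F (t + 0) v)) (at 0)"
  proof (rule leibniz_rule_bounded_real_derivative)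
    show "0 \<in> {a - t<..<b - t}" using t by simp
  next
    fix u v :: real assume u: "u \<in> {a - t<..<b - t}" and v: "v \<in> {-1..1}"
    then have tu: "t + u \<in> {a<..<b}" by auto
    have "((\<lambda>x. v * F x v) has_real_derivative Lop F (t + u) v) (at (u + t))"
      using optical_solution_deriv[OF F tu v] by (simp add: add.commute)
    then have "((\<lambda>u. v * F (u + t) v) has_real_derivative Lop F (t + u) v) (at u)"
      by (simp only: DERIV_shift)
    from DERIV_cmult[OF this, of "G t v"]
    show "((\<lambda>u. v * G t v * F (t + u) v) has_real_derivative G t v * Lop F (t + u) v) (at u)"
      by (simp add: add.commute mult.assoc mult.left_commute)
    show "\<bar>G t v * Lop F (t + u) v\<bar> \<le> M * (2 * M)"
      by (rule optical_solution_mult_Lop_bound[OF F G t tu v])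
  next
    fix u assume "u \<in> {a - t<..<b - t}"
    then have tu: "t + u \<in> {a<..<b}" by auto
    show "(\<lambda>v. v * G t v * F (t + u) v) integrable_on {-1..1}"
      by (rule optical_solution_flux_integrable[OF F G t tu])
  qed
  then show ?thesis by simp
qed

lemma optical_solution_scattering_const:
  assumes F: "optical_solution 1 F a b M" and G: "optical_solution (-1) G a b M"
    and t1: "t1 \<in> {a<..<b}" and t2: "t2 \<in> {a<..<b}"
  shows "integral {-1..1} (\<lambda>v. G t1 v * Lop F t1 v) = integral {-1..1} (\<lambda>v. G t2 v * Lop F t2 v)"
proof -
  define B where "B t u = integral {-1..1} (\<lambda>v. v * G t v * F (t + u) v)" for t u
  define e where "e = min (min (t1 - a) (b - t1)) (min (t2 - a) (b - t2))"
  have e: "e > 0" using t1 t2 by (simp add: e_def)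
  have B_eq: "B t1 u = B t2 u" if "u \<in> ball 0 e" for u
  proof -
    define a' where "a' = max a (a - u)"
    define b' where "b' = min b (b - u)"
    have "\<bar>u\<bar> < e" using that by simp
    then have t1': "t1 \<in> {a'<..<b'}" and t2': "t2 \<in> {a'<..<b'}"
      using t1 t2 unfolding a'_def b'_def e_def by auto
    have F': "optical_solution 1 (\<lambda>t. F (t + u)) a' b' M"
      by (rule optical_solution_subinterval[OF optical_solution_shift[OF F]])
        (simp_all add: a'_def b'_def)
    have G': "optical_solution (-1) G a' b' M"
      by (rule optical_solution_subinterval[OF G]) (simp_all add: a'_def b'_def)
    show ?thesis
      unfolding B_def using optical_solution_flux_const[OF F' G' t1' t2'] by simp
  qed
  have "((\<lambda>u. B t1 u) has_real_derivative integral {-1..1} (\<lambda>v. G t1 v * Lop F t1 v)) (at 0)"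
    unfolding B_def by (rule optical_solution_shifted_pairing_deriv[OF F G t1])
  then have "((\<lambda>u. B t2 u) has_real_derivative integral {-1..1} (\<lambda>v. G t1 v * Lop F t1 v)) (at 0)"
    by (rule has_field_derivative_transform_within_open[where S="ball 0 e"])
      (simp_all add: e B_eq)
  moreover have "((\<lambda>u. B t2 u) has_real_derivative integral {-1..1} (\<lambda>v. G t2 v * Lop F t2 v)) (at 0)"
    unfolding B_def by (rule optical_solution_shifted_pairing_deriv[OF F G t2])
  ultimately show ?thesis by (rule DERIV_unique)
qed

lemma indefinite_integral_pos_strict_mono:
  fixes rho :: "real \<Rightarrow> real"
  assumes cont: "continuous_on {0..1} rho" and pos: "\<And>x. x \<in> {0..1} \<Longrightarrow> rho x > 0"
  defines "tau \<equiv> \<lambda>x. integral {0..x} rho"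
  shows "continuous_on {0..1} tau"
    and "\<And>x. x \<in> {0<..<1} \<Longrightarrow> (tau has_real_derivative rho x) (at x)"
    and "strict_mono_on {0..1} tau"
proof -
  show tau_cont: "continuous_on {0..1} tau"
    unfolding tau_def by (intro indefinite_integral_continuous_1 integrable_continuous_interval cont)
  show tau_der: "(tau has_real_derivative rho x) (at x)" if x: "x \<in> {0<..<1}" for x
  proof -
    have "(tau has_real_derivative rho x) (at x within {0<..<1})"
      unfolding tau_def
      by (rule DERIV_subset[OF integral_has_real_derivative[OF cont]]) (use x in auto)
    moreover have "at x within {0<..<1} = at x" by (rule at_within_open) (use x in auto)
    ultimately show ?thesis by simp
  qed
  show "strict_mono_on {0..1} tau"
  proof (rule strict_mono_onI)
    fix x z :: real assume xz: "x \<in> {0..1}" "z \<in> {0..1}" "x < z"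
    show "tau x < tau z"
    proof (rule DERIV_pos_imp_increasing_open[OF \<open>x < z\<close>])
      fix w assume "x < w" "w < z"
      then have w: "w \<in> {0<..<1}" using xz by auto
      show "\<exists>y. (tau has_real_derivative y) (at w) \<and> 0 < y"
        using tau_der[OF w] pos[of w] w by (intro exI[of _ "rho w"]) auto
    next
      show "continuous_on {x..z} tau"
        by (rule continuous_on_subset[OF tau_cont]) (use xz in auto)
    qed
  qed
qed

lemma strict_mono_on_inverse_has_real_derivative:
  fixes tau rho :: "real \<Rightarrow> real"
  assumes cont: "continuous_on {0..1} tau" and mono: "strict_mono_on {0..1} tau"
    and der: "\<And>x. x \<in> {0<..<1} \<Longrightarrow> (tau has_real_derivative rho x) (at x)"
    and pos: "\<And>x. x \<in> {0<..<1} \<Longrightarrow> rho x > 0"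
  defines "X \<equiv> inv_into {0..1} tau"
  shows "\<And>x. x \<in> {0<..<1} \<Longrightarrow> tau x \<in> {tau 0<..<tau 1} \<and> X (tau x) = x"
    and "\<And>t. t \<in> {tau 0<..<tau 1} \<Longrightarrow>
      X t \<in> {0<..<1} \<and> (X has_real_derivative 1 / rho (X t)) (at t)"
proof -
  have inj: "inj_on tau {0..1}" using strict_mono_on_imp_inj_on[OF mono] .
  have img: "tau ` {0..1} = {tau 0..tau 1}"
  proof
    show "tau ` {0..1} \<subseteq> {tau 0..tau 1}"
      using mono by (auto simp: strict_mono_on_def less_eq_real_def)
    show "{tau 0..tau 1} \<subseteq> tau ` {0..1}"
      using IVT'[of tau 0 _ 1, OF _ _ _ cont] by fastforce
  qed
  have X_tau: "X (tau x) = x" if "x \<in> {0..1}" for x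
    unfolding X_def using inv_into_f_f[OF inj that] .
  have tau_X: "tau (X t) = t" and X_in: "X t \<in> {0..1}" if "t \<in> {tau 0..tau 1}" for t
  proof -
    have t: "t \<in> tau ` {0..1}" using that img by simp
    show "tau (X t) = t" unfolding X_def by (rule f_inv_into_f[OF t])
    show "X t \<in> {0..1}" unfolding X_def by (rule inv_into_into[OF t])
  qed
  show "tau x \<in> {tau 0<..<tau 1} \<and> X (tau x) = x" if "x \<in> {0<..<1}" for x
    using that mono X_tau by (auto simp: strict_mono_on_def)
  show "X t \<in> {0<..<1} \<and> (X has_real_derivative 1 / rho (X t)) (at t)"
    if t: "t \<in> {tau 0<..<tau 1}" for t
  proof -
    have x: "X t \<in> {0<..<1}"
      using X_in[of t] tau_X[of t] t by (cases "X t = 0"; cases "X t = 1") auto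
    have "isCont X t"
      using continuous_on_inv[OF cont compact_Icc, of X] X_tau img t
      by (intro continuous_on_interior[where S="{tau 0..tau 1}"]) auto
    then have "(X has_real_derivative inverse (rho (X t))) (at t)"
      using der[OF x] pos[OF x] t tau_X
      by (intro DERIV_inverse_function[where f=tau and a="tau 0" and b="tau 1"]) auto
    then show ?thesis using x by (simp add: inverse_eq_divide)
  qed
qed

lemma rte_solution_optical_solution:
  assumes sol: "rte_solution s Kn sigs siga f" and s: "s = 1 \<or> s = -1"
    and siga: "\<forall>x. siga x = 0" and Kn: "Kn > 0" and sigs_pos: "\<forall>x\<in>{0..1}. sigs x > 0"
    and bnd: "\<forall>x\<in>{0..1}. \<forall>v\<in>{-1..1}. \<bar>f x v\<bar> \<le> M"
    and X: "\<And>t. t \<in> {a<..<b} \<Longrightarrow> X t \<in> {0<..<1} \<and> (X has_real_derivative Kn / sigs (X t)) (at t)"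
  shows "optical_solution s (\<lambda>t v. f (X t) v) a b M"
proof -
  have L: "Lop (\<lambda>t v. f (X t) v) t v = Lop f (X t) v" for t v by (simp add: Lop_def vavg_def)
  have "((\<lambda>t. v * f (X t) v) has_real_derivative s * Lop f (X t) v) (at t)"
    if t: "t \<in> {a<..<b}" and v: "v \<in> {-1..1}" for t v
  proof -
    have x: "X t \<in> {0<..<1}" and dX: "(X has_real_derivative Kn / sigs (X t)) (at t)"
      using X t by auto
    have sx: "sigs (X t) > 0" using sigs_pos x by auto
    have "(\<lambda>x. f x v) differentiable (at (X t))" and eqn:
      "s * v * deriv (\<lambda>x. f x v) (X t) = (1 / Kn) * sigs (X t) * Lop f (X t) v"
      using sol x v siga unfolding rte_solution_def by auto
    then have "((\<lambda>x. v * f x v) has_real_derivative v * deriv (\<lambda>x. f x v) (X t)) (at (X t))"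
      by (intro DERIV_cmult) (simp add: DERIV_deriv_iff_real_differentiable)
    from DERIV_chain2[OF this dX]
    have "((\<lambda>t. v * f (X t) v) has_real_derivative
        v * deriv (\<lambda>x. f x v) (X t) * (Kn / sigs (X t))) (at t)" .
    moreover have "v * deriv (\<lambda>x. f x v) (X t) = s * ((1 / Kn) * sigs (X t) * Lop f (X t) v)"
      using eqn s by auto
    ultimately show ?thesis using Kn sx by (simp add: field_simps)
  qed
  then show ?thesis
    using sol X bnd unfolding optical_solution_def rte_solution_def L by fastforce
qed

lemma rte_solution_bounded:
  assumes "rte_solution s Kn sigs siga f"
  obtains M where "\<forall>x\<in>{0..1}. \<forall>v\<in>{-1..1}. \<bar>f x v\<bar> \<le> M"
proof -
  obtain B where "\<forall>z\<in>(\<lambda>(x, v). f x v) ` ({0..1} \<times> {-1..1}). norm z \<le> B"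
    using assms unfolding rte_solution_def bounded_iff by blast
  then show ?thesis using that by force
qed

lemma optical_depth_change_of_variables:
  fixes sigs :: "real \<Rightarrow> real"
  assumes Kn: "Kn > 0" and sigs_cont: "continuous_on {0..1} sigs"
    and sigs_pos: "\<forall>x\<in>{0..1}. sigs x > 0"
  obtains a b X where "a < b"
    and "\<And>x. x \<in> {0<..<1} \<Longrightarrow> \<exists>t\<in>{a<..<b}. X t = x"
    and "\<And>t. t \<in> {a<..<b} \<Longrightarrow>
      X t \<in> {0<..<1} \<and> (X has_real_derivative Kn / sigs (X t)) (at t)"
proof -
  define rho where "rho x = sigs x / Kn" for x
  define tau where "tau = (\<lambda>x. integral {0..x} rho)"
  have rho_cont: "continuous_on {0..1} rho" and rho_pos: "\<And>x. x \<in> {0..1} \<Longrightarrow> rho x > 0"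
    unfolding rho_def using sigs_cont sigs_pos Kn by (auto intro: continuous_intros)
  have tau_cont: "continuous_on {0..1} tau" and tau_mono: "strict_mono_on {0..1} tau"
    and tau_der: "\<And>x. x \<in> {0<..<1} \<Longrightarrow> (tau has_real_derivative rho x) (at x)"
    using indefinite_integral_pos_strict_mono[of rho] rho_cont rho_pos unfolding tau_def by blast+
  note X = strict_mono_on_inverse_has_real_derivative[OF tau_cont tau_mono tau_der]
  show ?thesis
  proof (rule that[of "tau 0" "tau 1" "inv_into {0..1} tau"])
    show "tau 0 < tau 1" using tau_mono by (simp add: strict_mono_on_def)
    show "\<exists>t\<in>{tau 0<..<tau 1}. inv_into {0..1} tau t = x" if "x \<in> {0<..<1}" for x
    proof
      show "tau x \<in> {tau 0<..<tau 1}" "inv_into {0..1} tau (tau x) = x"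
        using X(1) rho_pos that by auto
    qed
    show "inv_into {0..1} tau t \<in> {0<..<1} \<and>
        (inv_into {0..1} tau has_real_derivative Kn / sigs (inv_into {0..1} tau t)) (at t)"
      if "t \<in> {tau 0<..<tau 1}" for t
      using X(2) rho_pos that by (simp add: rho_def)
  qed
qed

theorem proposition1:
  fixes Kn :: real and sigs siga :: "real \<Rightarrow> real"
    and phid f0 g :: "real \<Rightarrow> real \<Rightarrow> real" and y :: real
  assumes Kn_pos: "Kn > 0"
    and sigs_pos: "\<forall>x\<in>{0..1}. sigs x > 0"
    and sigs_cont: "continuous_on {0..1} sigs"
    and siga_zero: "\<forall>x. siga x = 0"
    and y_bdry: "y \<in> {0, 1}"
    and f0_sol: "rte_solution 1 Kn sigs siga f0"
    and f0_bc: "\<forall>(x, v) \<in> Gamma_minus. f0 x v = phid x v"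
    and g_sol: "rte_solution (-1) Kn sigs siga g"
    and g_bc: "\<forall>(x, v) \<in> Gamma_plus. g x v = (if x = y then 1 else 0)"
  shows "\<exists>c. \<forall>x\<in>{0<..<1}. gammaKn Kn g f0 x = c"
proof -
  obtain M1 where M1: "\<forall>x\<in>{0..1}. \<forall>v\<in>{-1..1}. \<bar>f0 x v\<bar> \<le> M1"
    using rte_solution_bounded[OF f0_sol] .
  obtain M2 where M2: "\<forall>x\<in>{0..1}. \<forall>v\<in>{-1..1}. \<bar>g x v\<bar> \<le> M2"
    using rte_solution_bounded[OF g_sol] .
  obtain a b X where "a < b" and X_onto: "\<And>x. x \<in> {0<..<1} \<Longrightarrow> \<exists>t\<in>{a<..<b}. X t = x"
    and X_der: "\<And>t. t \<in> {a<..<b} \<Longrightarrow>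
      X t \<in> {0<..<1} \<and> (X has_real_derivative Kn / sigs (X t)) (at t)"
    using optical_depth_change_of_variables[OF Kn_pos sigs_cont sigs_pos] by blast
  have F: "optical_solution 1 (\<lambda>t. f0 (X t)) a b (max M1 M2)"
    using M1 Kn_pos sigs_pos siga_zero X_der
    by (intro rte_solution_optical_solution[OF f0_sol]) (auto intro: max.coboundedI1)
  have G: "optical_solution (-1) (\<lambda>t. g (X t)) a b (max M1 M2)"
    using M2 Kn_pos sigs_pos siga_zero X_der
    by (intro rte_solution_optical_solution[OF g_sol]) (auto intro: max.coboundedI2)
  define t0 where "t0 = (a + b) / 2"
  have t0: "t0 \<in> {a<..<b}" using \<open>a < b\<close> by (simp add: t0_def)
  have "gammaKn Kn g f0 x = gammaKn Kn g f0 (X t0)" if x: "x \<in> {0<..<1}" for x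
  proof -
    obtain t where t: "t \<in> {a<..<b}" and "X t = x" using X_onto[OF x] by blast
    from this(2) optical_solution_scattering_const[OF F G t t0]
    show ?thesis by (simp add: gammaKn_def Lop_def vavg_def)
  qed
  then show ?thesis by blast
qed

end
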